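(* Let $R:X\leftrightarrow\mathcal{P}Y$, $S:Y\leftrightarrow\mathcal{P}Z$, $T:Z\leftrightarrow\mathcal{P}W$ be multirelations and suppose $R$ is inner deterministic. Then (1) $R\ast S=R\,1_Y^{\smile}\,S$; (2) $R\ast(S\ast T)=(R\ast S)\ast T$.
   Context: Relations $R\subseteq X\times Y$ are written $R:X\leftrightarrow Y$; composition $RS$ is diagrammatic relational composition and $R^{\smile}$ is the converse. A multirelation is a relation $X\leftrightarrow\mathcal{P}Y$. $1_Y=\{(b,\{b\})\mid b\in Y\}$. $R$ is inner deterministic if every $(a,B)\in R$ has $B$ a singleton. The Peleg composition of $R:X\leftrightarrow\mathcal{P}Y$ and $S:Y\leftrightarrow\mathcal{P}Z$ is $R\ast S=\{(a,C)\mid\exists B.\ (a,B)\in R\wedge\exists f:Y\to\mathcal{P}Z.\ (\forall b\in B.\ (b,f(b))\in S)\wedge C=\bigcup_{b\in B}f(b)\}$. *)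

theory Defs
  imports Main
begin

text \<open>The ground sets X, Y, Z, W are the (whole) types 'a, 'b, 'c, 'd.
  Relational composition R S (diagrammatic) is Isabelle's relcomp R O S,
  converse is converse (R^-1).\<close>

definition mr_id :: "('b \<times> 'b set) set" where
  "mr_id = {(b, {b}) | b. True}"

definition inner_det :: "('a \<times> 'b set) set \<Rightarrow> bool" where
  "inner_det R \<longleftrightarrow> (\<forall>a B. (a, B) \<in> R \<longrightarrow> (\<exists>b. B = {b}))"

definition peleg_comp :: "('a \<times> 'b set) set \<Rightarrow> ('b \<times> 'c set) set \<Rightarrow> ('a \<times> 'c set) set"
  (infixl "\<star>" 75) where
  "R \<star> S = {(a, C) | a C. \<exists>B. (a, B) \<in> R \<and>
      (\<exists>f :: 'b \<Rightarrow> 'c set. (\<forall>b\<in>B. (b, f b) \<in> S) \<and> C = (\<Union>b\<in>B. f b))}"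

end

theory Submission
  imports Defs
begin

text \<open>An inner deterministic multirelation R only ever feeds a singleton {b} into the
  Peleg composition, and the union over a singleton is a single value of S; so R \<star> S
  is the ordinary relational composite of R with S, once singletons {b} are identified
  with b through the converse of mr_id. Associativity then reduces to the fact that
  Peleg composition absorbs an ordinary relation on the left.\<close>

lemma peleg_compI:
  assumes "(a, B) \<in> R" and "\<forall>b\<in>B. (b, f b) \<in> S"
  shows "(a, \<Union>b\<in>B. f b) \<in> R \<star> S"
  using assms unfolding peleg_comp_def by blast

lemma peleg_compE:
  assumes "(a, C) \<in> R \<star> S"
  obtains B f where "(a, B) \<in> R" and "\<forall>b\<in>B. (b, f b) \<in> S" and "C = (\<Union>b\<in>B. f b)"
  using assms unfolding peleg_comp_def by blast

lemma converse_mr_id: "mr_id\<inverse> = {({b}, b) | b. True}"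
  unfolding mr_id_def by blast

lemma relcomp_peleg_comp_assoc: "(Q O S) \<star> T = Q O (S \<star> T)"
proof (rule equalityI; rule subrelI)
  fix a C
  assume "(a, C) \<in> (Q O S) \<star> T"
  then obtain B f where "(a, B) \<in> Q O S" and "\<forall>c\<in>B. (c, f c) \<in> T" and "C = (\<Union>c\<in>B. f c)"
    by (rule peleg_compE)
  then obtain b where "(a, b) \<in> Q" and "(b, C) \<in> S \<star> T"
    by (auto intro: peleg_compI)
  then show "(a, C) \<in> Q O (S \<star> T)" by blast
next
  fix a C
  assume "(a, C) \<in> Q O (S \<star> T)"
  then obtain b where "(a, b) \<in> Q" and "(b, C) \<in> S \<star> T" by blast
  moreover from \<open>(b, C) \<in> S \<star> T\<close> obtain B f where "(b, B) \<in> S"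
    and "\<forall>c\<in>B. (c, f c) \<in> T" and "C = (\<Union>c\<in>B. f c)"
    by (rule peleg_compE)
  ultimately show "(a, C) \<in> (Q O S) \<star> T"
    using peleg_compI[of a B "Q O S" f T] by blast
qed

lemma mem_peleg_comp_inner_det:
  assumes "inner_det R"
  shows "(a, C) \<in> R \<star> S \<longleftrightarrow> (\<exists>b. (a, {b}) \<in> R \<and> (b, C) \<in> S)"
proof
  assume "(a, C) \<in> R \<star> S"
  then obtain B f where aB: "(a, B) \<in> R" and f: "\<forall>b\<in>B. (b, f b) \<in> S" and C: "C = (\<Union>b\<in>B. f b)"
    by (rule peleg_compE)
  from aB assms obtain b where "B = {b}" unfolding inner_det_def by blast
  with aB f C show "\<exists>b. (a, {b}) \<in> R \<and> (b, C) \<in> S" by auto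
next
  assume "\<exists>b. (a, {b}) \<in> R \<and> (b, C) \<in> S"
  then obtain b where "(a, {b}) \<in> R" and "(b, C) \<in> S" by blast
  then show "(a, C) \<in> R \<star> S"
    using peleg_compI[of a "{b}" R "\<lambda>_. C" S] by simp
qed

lemma peleg_comp_inner_det_eq_relcomp:
  assumes "inner_det R"
  shows "R \<star> S = R O mr_id\<inverse> O S"
proof (rule equalityI; rule subrelI)
  fix a C
  assume "(a, C) \<in> R \<star> S"
  then obtain b where "(a, {b}) \<in> R" and "(b, C) \<in> S"
    by (auto simp: mem_peleg_comp_inner_det[OF assms])
  moreover have "({b}, b) \<in> mr_id\<inverse>" by (simp add: converse_mr_id)
  ultimately show "(a, C) \<in> R O mr_id\<inverse> O S" by blast
next
  fix a C
  assume "(a, C) \<in> R O mr_id\<inverse> O S"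
  then show "(a, C) \<in> R \<star> S"
    unfolding converse_mr_id by (auto simp: mem_peleg_comp_inner_det[OF assms])
qed

theorem lemma3p10:
  fixes R :: "('x \<times> 'y set) set" and S :: "('y \<times> 'z set) set"
    and T :: "('z \<times> 'w set) set"
  assumes "inner_det R"
  shows "R \<star> S = R O (mr_id :: ('y \<times> 'y set) set)\<inverse> O S \<and>
         R \<star> (S \<star> T) = (R \<star> S) \<star> T"
proof
  show "R \<star> S = R O (mr_id :: ('y \<times> 'y set) set)\<inverse> O S"
    using peleg_comp_inner_det_eq_relcomp[OF assms] .
  have "R \<star> (S \<star> T) = (R O mr_id\<inverse>) O (S \<star> T)"
    by (simp add: peleg_comp_inner_det_eq_relcomp[OF assms] O_assoc)
  also have "\<dots> = ((R O mr_id\<inverse>) O S) \<star> T"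
    by (rule relcomp_peleg_comp_assoc[symmetric])
  also have "\<dots> = (R \<star> S) \<star> T"
    by (simp add: peleg_comp_inner_det_eq_relcomp[OF assms] O_assoc)
  finally show "R \<star> (S \<star> T) = (R \<star> S) \<star> T" .
qed

end
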